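(* Let $\mathbb Y^{(\mathcal K)}$ be the stationary Markov chain on $I^2\times\{0,1\}$ with transition matrix $\mathcal K$ and stationary law $\zeta$, and $\mathbb Y^{(\mathcal A)}$ the stationary Markov chain on $I^2\times\mathcal E^*$ with transition matrix $\mathcal A$ and stationary law $\eta$. Then $$h(\mathbb Y^{(\mathcal A)})=h(\mathbb Y^{(\mathcal K)})+\sum_{i\in I}\mu(i)P(i,\mathcal E)H(D^i),\qquad H(D^i)=-\sum_{\delta\in\mathcal E}\frac{P(i,\delta)}{P(i,\mathcal E)}\log\frac{P(i,\delta)}{P(i,\mathcal E)},$$ and $$h(\mathbb Y^{(\mathcal A)})=-(1-\gamma)\sum_{j\in I}\mu(j)\log\mu(j)-\sum_{i,j\in I}\mu(i)P(i,j)\log P(i,j)-\sum_{i\in I,\delta\in\mathcal E}\mu(i)P(i,\delta)\log P(i,\delta).$$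
   Context: $I$ and $\mathcal E$ are disjoint countable sets, $\mathcal E\ne\emptyset$; $P$ is a stochastic matrix on $I\cup\mathcal E$ with all $\epsilon\in\mathcal E$ absorbing, irreducible restriction $P_I$ to $I$, $\sum_{i\in I}P(i,\mathcal E)>0$ where $P(i,\mathcal E)=\sum_{\epsilon\in\mathcal E}P(i,\epsilon)$, and $\mathcal E$ reached a.s. from every $i\in I$. $\mu$ is a quasi-stationary distribution of $P_I$: a probability on $I$ with $\mu^tP_I=\gamma\mu^t$, $\gamma=\sum_{i,j\in I}\mu(i)P(i,j)\in(0,1)$. Terms with $P(i,\mathcal E)=0$ contribute $0$. The matrix $\mathcal K$ on $I^2\times\{0,1\}$: $\mathcal K((i,j,a),(l,k,b))=0$ if $l\ne j$, and $\mathcal K((i,j,a),(j,k,b))=P(j,k)\mathbf 1(b=1)+P(j,\mathcal E)\mu(k)\mathbf 1(b=0)$; stationary law $\zeta(i,j,a)=\mu(i)P(i,j)\mathbf 1(a=1)+\mu(i)P(i,\mathcal E)\mu(j)\mathbf 1(a=0)$. Let $\mathcal E^*=\mathcal E\cup\{o\}$ with $o\notin I\cup\mathcal E$. The matrix $\mathcal A$ on $I^2\times\mathcal E^*$: $\mathcal A((i,j,\delta),(l,k,\epsilon))=0$ if $l\neq j$, $=P(j,k)$ if $l=j,\epsilon=o$, and $=P(j,\epsilon)\mu(k)$ if $l=j,\epsilon\in\mathcal E$; stationary law $\eta(i,j,\delta)=\mu(i)P(i,j)\mathbf 1(\delta=o)+\mu(i)P(i,\delta)\mu(j)\mathbf 1(\delta\in\mathcal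 E)$. For a stationary Markov chain $\mathbb Z$ with transition matrix $R$ and stationary law $\nu$, $h(\mathbb Z)=-\sum_a\nu(a)\sum_bR(a,b)\log R(a,b)$ (with $0\log 0=0$). *)

theory Defs
  imports "HOL-Analysis.Analysis"
begin

definition PE :: "('s \<Rightarrow> 's \<Rightarrow> real) \<Rightarrow> 's set \<Rightarrow> 's \<Rightarrow> real" where
  "PE P E i = (\<Sum>\<^sub>\<infinity>e\<in>E. P i e)"

fun mpow :: "('s \<Rightarrow> 's \<Rightarrow> real) \<Rightarrow> 's set \<Rightarrow> nat \<Rightarrow> 's \<Rightarrow> 's \<Rightarrow> real" where
  "mpow P S 0 x y = (if x = y then 1 else 0)"
| "mpow P S (Suc n) x y = (\<Sum>\<^sub>\<infinity>z\<in>S. mpow P S n x z * P z y)"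

text \<open>Entropy rate h of a stationary chain with transition matrix R and stationary law nu
  on state set S: h = - sum_a nu(a) sum_b R(a,b) log R(a,b), with 0 log 0 = 0
  (Isabelle: ln 0 = 0). All terms are nonnegative, so h is taken in [0,\<infinity>].\<close>
definition entropy_rate :: "'x set \<Rightarrow> ('x \<Rightarrow> 'x \<Rightarrow> real) \<Rightarrow> ('x \<Rightarrow> real) \<Rightarrow> ennreal" where
  "entropy_rate S R \<nu> =
     (\<Sum>\<^sub>\<infinity>a\<in>S. ennreal (\<nu> a) * (\<Sum>\<^sub>\<infinity>b\<in>S. ennreal (- (R a b * ln (R a b)))))"

definition Kmat :: "('s \<Rightarrow> 's \<Rightarrow> real) \<Rightarrow> 's set \<Rightarrow> ('s \<Rightarrow> real)
    \<Rightarrow> ('s \<times> 's \<times> nat) \<Rightarrow> ('s \<times> 's \<times> nat) \<Rightarrow> real" where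
  "Kmat P E \<mu> x y = (case x of (i, j, a) \<Rightarrow> case y of (l, k, b) \<Rightarrow>
     if l \<noteq> j then 0
     else (if b = 1 then P j k else 0) + (if b = 0 then PE P E j * \<mu> k else 0))"

definition zeta :: "('s \<Rightarrow> 's \<Rightarrow> real) \<Rightarrow> 's set \<Rightarrow> ('s \<Rightarrow> real) \<Rightarrow> ('s \<times> 's \<times> nat) \<Rightarrow> real" where
  "zeta P E \<mu> x = (case x of (i, j, a) \<Rightarrow>
     (if a = 1 then \<mu> i * P i j else 0) + (if a = 0 then \<mu> i * PE P E i * \<mu> j else 0))"

text \<open>E* = E plus a fresh point o; modelled as 's option with None = o, Some e = e.\<close>
definition Estar :: "'s set \<Rightarrow> 's option set" where
  "Estar E = insert None (Some ` E)"

definition Amat :: "('s \<Rightarrow> 's \<Rightarrow> real) \<Rightarrow> ('s \<Rightarrow> real)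
    \<Rightarrow> ('s \<times> 's \<times> 's option) \<Rightarrow> ('s \<times> 's \<times> 's option) \<Rightarrow> real" where
  "Amat P \<mu> x y = (case x of (i, j, d) \<Rightarrow> case y of (l, k, e) \<Rightarrow>
     if l \<noteq> j then 0
     else (case e of None \<Rightarrow> P j k | Some \<epsilon> \<Rightarrow> P j \<epsilon> * \<mu> k))"

definition eta :: "('s \<Rightarrow> 's \<Rightarrow> real) \<Rightarrow> ('s \<Rightarrow> real) \<Rightarrow> ('s \<times> 's \<times> 's option) \<Rightarrow> real" where
  "eta P \<mu> x = (case x of (i, j, d) \<Rightarrow>
     (case d of None \<Rightarrow> \<mu> i * P i j | Some \<delta> \<Rightarrow> \<mu> i * P i \<delta> * \<mu> j))"

definition HD :: "('s \<Rightarrow> 's \<Rightarrow> real) \<Rightarrow> 's set \<Rightarrow> 's \<Rightarrow> ennreal" where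
  "HD P E i = (\<Sum>\<^sub>\<infinity>\<delta>\<in>E. ennreal (- ((P i \<delta> / PE P E i) * ln (P i \<delta> / PE P E i))))"

end

theory Submission
  imports Defs
begin

text \<open>Both chains move along the edges of I: from (i, j, _) they jump to some (j, k, _) with a
  probability that depends only on j and on the new label. Their entropy rates are therefore
  averages of row entropies under the law of the current vertex j, and this law is \<mu> for both
  \<eta> and \<zeta>, because \<mu> is quasi-stationary with exit mass 1 - \<gamma>. The chain rule
  -xy ln(xy) = -y x ln x - x y ln y evaluates the rows: A records every exit \<delta> separately
  whereas K lumps them into P(j,E), and by the grouping property of entropy the two rows differ by
  P(j,E) H(D^j).\<close>

lemma ennreal_summable_on [simp]: "(f :: 'a \<Rightarrow> ennreal) summable_on A"
  by (simp add: nonneg_summable_on_complete)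

lemma ennreal_infsum_mono_set:
  fixes f :: "'a \<Rightarrow> ennreal"
  shows "A \<subseteq> B \<Longrightarrow> infsum f A \<le> infsum f B"
  by (rule infsum_mono_neutral) auto

lemma ennreal_infsum_cmult_right:
  fixes f :: "'a \<Rightarrow> ennreal"
  shows "(\<Sum>\<^sub>\<infinity>x\<in>A. c * f x) = c * (\<Sum>\<^sub>\<infinity>x\<in>A. f x)"
  by (simp add: nonneg_infsum_complete SUP_mult_left_ennreal sum_distrib_left)

lemma ennreal_infsum_cmult_left:
  fixes f :: "'a \<Rightarrow> ennreal"
  shows "(\<Sum>\<^sub>\<infinity>x\<in>A. f x * c) = (\<Sum>\<^sub>\<infinity>x\<in>A. f x) * c"
  using ennreal_infsum_cmult_right[of c f A] by (simp add: mult.commute)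

lemma ennreal_infsum_add:
  fixes f g :: "'a \<Rightarrow> ennreal"
  shows "(\<Sum>\<^sub>\<infinity>x\<in>A. f x + g x) = (\<Sum>\<^sub>\<infinity>x\<in>A. f x) + (\<Sum>\<^sub>\<infinity>x\<in>A. g x)"
  by (rule infsum_add) simp_all

lemma ennreal_infsum_finite_Sigma:
  fixes f :: "'a \<times> 'b \<Rightarrow> ennreal"
  assumes "finite A"
  shows "infsum f (Sigma A B) = (\<Sum>x\<in>A. \<Sum>\<^sub>\<infinity>y\<in>B x. f (x, y))"
  using assms
proof (induction A rule: finite_induct)
  case empty
  then show ?case by simp
next
  case (insert x A)
  have split: "Sigma (insert x A) B = Pair x ` B x \<union> Sigma A B" by auto
  have "infsum f (Sigma (insert x A) B) = infsum f (Pair x ` B x) + infsum f (Sigma A B)"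
    unfolding split by (rule infsum_Un_disjoint) (use insert in auto)
  also have "infsum f (Pair x ` B x) = (\<Sum>\<^sub>\<infinity>y\<in>B x. f (x, y))"
    by (subst infsum_reindex) (auto simp: o_def inj_on_def)
  finally show ?case using insert by simp
qed

text \<open>Since ennreal is not a uniform space, infsum_Sigma does not apply; instead both sides are
  compared as suprema of finite partial sums.\<close>
lemma ennreal_infsum_Sigma:
  fixes f :: "'a \<times> 'b \<Rightarrow> ennreal"
  shows "infsum f (Sigma A B) = (\<Sum>\<^sub>\<infinity>x\<in>A. \<Sum>\<^sub>\<infinity>y\<in>B x. f (x, y))"
proof (rule antisym)
  define g where "g x = (\<Sum>\<^sub>\<infinity>y\<in>B x. f (x, y))" for x
  have "sum f F \<le> infsum g A" if "finite F" "F \<subseteq> Sigma A B" for F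
  proof -
    have "sum f F = infsum f F"
      using that by simp
    also have "\<dots> \<le> infsum f (Sigma (fst ` F) B)"
      using that by (intro ennreal_infsum_mono_set) force
    also have "\<dots> = infsum g (fst ` F)"
      unfolding g_def using that by (simp add: ennreal_infsum_finite_Sigma)
    also have "\<dots> \<le> infsum g A"
      using that by (intro ennreal_infsum_mono_set) auto
    finally show ?thesis .
  qed
  then show "infsum f (Sigma A B) \<le> infsum g A"
    by (auto simp: nonneg_infsum_complete intro!: SUP_least)
  have "sum g G \<le> infsum f (Sigma A B)" if "finite G" "G \<subseteq> A" for G
    using that unfolding g_def
    by (metis ennreal_infsum_finite_Sigma ennreal_infsum_mono_set Sigma_mono order_refl)
  then show "infsum g A \<le> infsum f (Sigma A B)"
    by (auto simp: nonneg_infsum_complete intro!: SUP_least)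
qed

lemma ennreal_infsum_Times:
  fixes g :: "'a \<Rightarrow> 'b \<Rightarrow> ennreal"
  shows "(\<Sum>\<^sub>\<infinity>(x, y)\<in>A \<times> B. g x y) = (\<Sum>\<^sub>\<infinity>x\<in>A. \<Sum>\<^sub>\<infinity>y\<in>B. g x y)"
  using ennreal_infsum_Sigma[of "\<lambda>(x, y). g x y" A "\<lambda>_. B"] by simp

lemma ennreal_infsum_swap:
  fixes g :: "'a \<Rightarrow> 'b \<Rightarrow> ennreal"
  shows "(\<Sum>\<^sub>\<infinity>x\<in>A. \<Sum>\<^sub>\<infinity>y\<in>B. g x y) = (\<Sum>\<^sub>\<infinity>y\<in>B. \<Sum>\<^sub>\<infinity>x\<in>A. g x y)"
proof -
  have "(\<Sum>\<^sub>\<infinity>(x, y)\<in>A \<times> B. g x y) = infsum (\<lambda>(x, y). g x y) (prod.swap ` (B \<times> A))"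
    by (simp only: product_swap)
  also have "\<dots> = (\<Sum>\<^sub>\<infinity>(y, x)\<in>B \<times> A. g x y)"
    by (subst infsum_reindex) (simp_all add: o_def case_prod_unfold)
  finally show ?thesis
    by (simp add: ennreal_infsum_Times)
qed

lemma infsum_ennreal_has_sum:
  fixes f :: "'a \<Rightarrow> real"
  assumes "(f has_sum s) A" "\<And>x. x \<in> A \<Longrightarrow> 0 \<le> f x"
  shows "(\<Sum>\<^sub>\<infinity>x\<in>A. ennreal (f x)) = ennreal s"
proof -
  have "((ennreal \<circ> f) has_sum ennreal s) A"
  proof (rule has_sum_comm_additive_general[OF _ _ assms(1)])
    show "sum (ennreal \<circ> f) F = ennreal (sum f F)" if "finite F" "F \<subseteq> A" for F
      unfolding o_def by (rule sum_ennreal) (use that assms(2) in auto)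
    show "ennreal \<midarrow>s\<rightarrow> ennreal s"
      by (intro tendsto_ennrealI tendsto_ident_at)
  qed
  then show ?thesis
    by (simp add: infsumI o_def)
qed

lemma has_sum_nonneg_term_le:
  fixes f :: "'a \<Rightarrow> real"
  assumes "(f has_sum s) A" "y \<in> A" "\<And>x. x \<in> A \<Longrightarrow> 0 \<le> f x"
  shows "f y \<le> s"
  using has_sum_mono_neutral[OF has_sum_finite[of "{y}" f] assms(1)] assms(2,3) by auto

lemma infsum_Estar:
  fixes g :: "'a option \<Rightarrow> ennreal"
  shows "infsum g (Estar E) = g None + (\<Sum>\<^sub>\<infinity>e\<in>E. g (Some e))"
proof -
  have "infsum g (Estar E) = g None + infsum g (Some ` E)"
    unfolding Estar_def by (rule infsum_insert) auto
  also have "infsum g (Some ` E) = (\<Sum>\<^sub>\<infinity>e\<in>E. g (Some e))"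
    by (subst infsum_reindex) (auto simp: o_def)
  finally show ?thesis .
qed

text \<open>The ennreal cast truncates -x ln x to 0 for x > 1, hence the bounds x \<le> 1 below.\<close>
definition entropy_term :: "real \<Rightarrow> ennreal" where
  "entropy_term x = ennreal (- (x * ln x))"

lemma entropy_term_0 [simp]: "entropy_term 0 = 0"
  by (simp add: entropy_term_def)

lemma ennreal_mult_entropy_term:
  "0 \<le> c \<Longrightarrow> ennreal (- (c * x * ln x)) = ennreal c * entropy_term x"
  by (simp add: entropy_term_def ennreal_mult'[symmetric] mult.assoc)

lemma entropy_term_mult:
  assumes "0 \<le> x" "x \<le> 1" "0 \<le> y" "y \<le> 1"
  shows "entropy_term (x * y) = ennreal y * entropy_term x + ennreal x * entropy_term y"
proof (cases "x = 0 \<or> y = 0")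
  case True
  then show ?thesis by auto
next
  case False
  with assms have pos: "0 < x" "0 < y" by auto
  with assms have "0 \<le> - (x * ln x)" "0 \<le> - (y * ln y)"
    by (simp_all add: mult_nonneg_nonpos)
  moreover have "- (x * y * ln (x * y)) = y * - (x * ln x) + x * - (y * ln y)"
    using pos by (simp add: ln_mult algebra_simps)
  ultimately show ?thesis
    using pos unfolding entropy_term_def
    by (simp only: ennreal_plus mult_nonneg_nonneg less_imp_le ennreal_mult)
qed

lemma infsum_entropy_term_scaled:
  assumes p: "(p has_sum 1) A" "\<And>x. x \<in> A \<Longrightarrow> 0 \<le> p x" and c: "0 \<le> c" "c \<le> 1"
  shows "(\<Sum>\<^sub>\<infinity>x\<in>A. entropy_term (c * p x))
       = entropy_term c + ennreal c * (\<Sum>\<^sub>\<infinity>x\<in>A. entropy_term (p x))"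
proof -
  have "p x \<le> 1" if "x \<in> A" for x
    using has_sum_nonneg_term_le[OF p(1) that p(2)] .
  then have "(\<Sum>\<^sub>\<infinity>x\<in>A. entropy_term (c * p x))
      = (\<Sum>\<^sub>\<infinity>x\<in>A. ennreal (p x) * entropy_term c + ennreal c * entropy_term (p x))"
    using p(2) c by (intro infsum_cong) (simp add: entropy_term_mult)
  also have "\<dots> = entropy_term c + ennreal c * (\<Sum>\<^sub>\<infinity>x\<in>A. entropy_term (p x))"
    using infsum_ennreal_has_sum[OF p]
    by (simp add: ennreal_infsum_add ennreal_infsum_cmult_right ennreal_infsum_cmult_left)
  finally show ?thesis .
qed

lemma infsum_entropy_term_grouping:
  assumes p: "(p has_sum s) A" "\<And>x. x \<in> A \<Longrightarrow> 0 \<le> p x" and "s \<le> 1"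
  shows "(\<Sum>\<^sub>\<infinity>x\<in>A. entropy_term (p x))
       = entropy_term s + ennreal s * (\<Sum>\<^sub>\<infinity>x\<in>A. entropy_term (p x / s))"
proof (cases "s = 0")
  case True
  then have "p x = 0" if "x \<in> A" for x
    using has_sum_nonneg_term_le[OF p(1) that p(2)] p(2)[OF that] by simp
  then show ?thesis
    using True by (simp add: infsum_0)
next
  case False
  with has_sum_nonneg[OF p] have s: "0 < s" by simp
  have "((\<lambda>x. p x / s) has_sum 1) A"
    using has_sum_cmult_left[OF p(1), of "1 / s"] s by simp
  then have "(\<Sum>\<^sub>\<infinity>x\<in>A. entropy_term (s * (p x / s)))
      = entropy_term s + ennreal s * (\<Sum>\<^sub>\<infinity>x\<in>A. entropy_term (p x / s))"
    using p(2) s \<open>s \<le> 1\<close> by (intro infsum_entropy_term_scaled) auto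
  then show ?thesis
    using s by simp
qed

lemma entropy_rate_edge_chain:
  fixes R :: "'a \<times> 'a \<times> 'b \<Rightarrow> 'a \<times> 'a \<times> 'b \<Rightarrow> real"
  assumes R: "\<And>i j t l k u. R (i, j, t) (l, k, u) = (if l = j then Q j k u else 0)"
  shows "entropy_rate (S \<times> S \<times> T) R \<nu>
       = (\<Sum>\<^sub>\<infinity>j\<in>S. (\<Sum>\<^sub>\<infinity>i\<in>S. \<Sum>\<^sub>\<infinity>t\<in>T. ennreal (\<nu> (i, j, t)))
                    * (\<Sum>\<^sub>\<infinity>k\<in>S. \<Sum>\<^sub>\<infinity>u\<in>T. entropy_term (Q j k u)))"
proof -
  define row where "row j = (\<Sum>\<^sub>\<infinity>k\<in>S. \<Sum>\<^sub>\<infinity>u\<in>T. entropy_term (Q j k u))" for j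
  have out_row: "(\<Sum>\<^sub>\<infinity>y\<in>S \<times> S \<times> T. entropy_term (R (i, j, t) y)) = row j" if "j \<in> S" for i j t
  proof -
    have "(\<Sum>\<^sub>\<infinity>y\<in>S \<times> S \<times> T. entropy_term (R (i, j, t) y))
        = (\<Sum>\<^sub>\<infinity>l\<in>S. \<Sum>\<^sub>\<infinity>k\<in>S. \<Sum>\<^sub>\<infinity>u\<in>T. entropy_term (R (i, j, t) (l, k, u)))"
      by (simp add: ennreal_infsum_Sigma)
    also have "\<dots> = (\<Sum>\<^sub>\<infinity>l\<in>S. if l = j then row j else 0)"
      by (intro infsum_cong) (simp add: R row_def)
    also have "\<dots> = (\<Sum>\<^sub>\<infinity>l\<in>{j}. if l = j then row j else 0)"
      by (rule infsum_cong_neutral) (use that in auto)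
    also have "\<dots> = row j"
      by simp
    finally show ?thesis .
  qed
  have "entropy_rate (S \<times> S \<times> T) R \<nu>
      = (\<Sum>\<^sub>\<infinity>x\<in>S \<times> S \<times> T. ennreal (\<nu> x) * (\<Sum>\<^sub>\<infinity>y\<in>S \<times> S \<times> T. entropy_term (R x y)))"
    unfolding entropy_rate_def entropy_term_def ..
  also have "\<dots> = (\<Sum>\<^sub>\<infinity>i\<in>S. \<Sum>\<^sub>\<infinity>j\<in>S. \<Sum>\<^sub>\<infinity>t\<in>T.
                     ennreal (\<nu> (i, j, t)) * (\<Sum>\<^sub>\<infinity>y\<in>S \<times> S \<times> T. entropy_term (R (i, j, t) y)))"
    by (subst ennreal_infsum_Sigma) (rule infsum_cong, rule ennreal_infsum_Sigma)
  also have "\<dots> = (\<Sum>\<^sub>\<infinity>i\<in>S. \<Sum>\<^sub>\<infinity>j\<in>S. \<Sum>\<^sub>\<infinity>t\<in>T. ennreal (\<nu> (i, j, t)) * row j)"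
    by (intro infsum_cong) (simp add: out_row)
  also have "\<dots> = (\<Sum>\<^sub>\<infinity>j\<in>S. (\<Sum>\<^sub>\<infinity>i\<in>S. \<Sum>\<^sub>\<infinity>t\<in>T. ennreal (\<nu> (i, j, t))) * row j)"
    by (subst ennreal_infsum_swap) (simp add: ennreal_infsum_cmult_left)
  finally show ?thesis
    unfolding row_def .
qed

locale quasi_stationary_exit =
  fixes I E :: "'s set" and P :: "'s \<Rightarrow> 's \<Rightarrow> real" and \<mu> :: "'s \<Rightarrow> real" and \<gamma> :: real
  assumes disjoint: "I \<inter> E = {}"
    and P_nonneg: "\<And>x y. x \<in> I \<Longrightarrow> y \<in> I \<union> E \<Longrightarrow> 0 \<le> P x y"
    and P_row_sum: "\<And>x. x \<in> I \<Longrightarrow> ((\<lambda>y. P x y) has_sum 1) (I \<union> E)"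
    and \<mu>_nonneg: "\<And>i. i \<in> I \<Longrightarrow> 0 \<le> \<mu> i"
    and \<mu>_sum: "(\<mu> has_sum 1) I"
    and quasi_stationary: "\<And>j. j \<in> I \<Longrightarrow> ((\<lambda>i. \<mu> i * P i j) has_sum \<gamma> * \<mu> j) I"
    and \<gamma>_nonneg: "0 \<le> \<gamma>" and \<gamma>_le_1: "\<gamma> \<le> 1"
begin

lemma exit_has_sum:
  assumes "j \<in> I"
  shows "((\<lambda>e. P j e) has_sum PE P E j) E"
proof -
  have "(\<lambda>e. P j e) summable_on E"
    using P_row_sum[OF assms] by (meson Un_upper2 summable_on_def summable_on_subset_banach)
  then show ?thesis
    unfolding PE_def by (rule has_sum_infsum)
qed

lemma stay_has_sum:
  assumes "j \<in> I"
  shows "((\<lambda>k. P j k) has_sum 1 - PE P E j) I"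
proof -
  obtain t where t: "((\<lambda>k. P j k) has_sum t) I"
    using P_row_sum[OF assms] by (meson Un_upper1 summable_on_def summable_on_subset_banach)
  have "((\<lambda>k. P j k) has_sum t + PE P E j) (I \<union> E)"
    using t exit_has_sum[OF assms] disjoint by (rule has_sum_Un_disjoint)
  then have "t + PE P E j = 1"
    using P_row_sum[OF assms] by (rule has_sum_unique)
  then have "1 - PE P E j = t"
    by simp
  with t show ?thesis
    by simp
qed

lemma PE_nonneg: "j \<in> I \<Longrightarrow> 0 \<le> PE P E j"
  by (rule has_sum_nonneg[OF exit_has_sum]) (auto intro: P_nonneg)

lemma PE_le_1: "j \<in> I \<Longrightarrow> PE P E j \<le> 1"
  using has_sum_nonneg[OF stay_has_sum, of j] P_nonneg by auto

lemma P_le_1: "x \<in> I \<Longrightarrow> y \<in> I \<union> E \<Longrightarrow> P x y \<le> 1"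
  by (rule has_sum_nonneg_term_le[OF P_row_sum]) (auto intro: P_nonneg)

lemma exit_mass: "(\<Sum>\<^sub>\<infinity>i\<in>I. ennreal (\<mu> i * PE P E i)) = ennreal (1 - \<gamma>)"
proof -
  have arrivals: "(\<Sum>\<^sub>\<infinity>i\<in>I. ennreal (\<mu> i * P i k)) = ennreal (\<gamma> * \<mu> k)" if "k \<in> I" for k
    using quasi_stationary[OF that] \<mu>_nonneg P_nonneg that by (intro infsum_ennreal_has_sum) auto
  have stays: "(\<Sum>\<^sub>\<infinity>k\<in>I. ennreal (\<mu> i * P i k)) = ennreal (\<mu> i * (1 - PE P E i))" if "i \<in> I" for i
    using has_sum_cmult_right[OF stay_has_sum[OF that], of "\<mu> i"] \<mu>_nonneg P_nonneg that
    by (intro infsum_ennreal_has_sum) auto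
  have "ennreal \<gamma> = (\<Sum>\<^sub>\<infinity>k\<in>I. ennreal (\<gamma> * \<mu> k))"
    using has_sum_cmult_right[OF \<mu>_sum, of \<gamma>] \<gamma>_nonneg \<mu>_nonneg
    by (intro infsum_ennreal_has_sum[symmetric]) auto
  also have "\<dots> = (\<Sum>\<^sub>\<infinity>k\<in>I. \<Sum>\<^sub>\<infinity>i\<in>I. ennreal (\<mu> i * P i k))"
    by (intro infsum_cong) (simp add: arrivals)
  also have "\<dots> = (\<Sum>\<^sub>\<infinity>i\<in>I. \<Sum>\<^sub>\<infinity>k\<in>I. ennreal (\<mu> i * P i k))"
    by (rule ennreal_infsum_swap)
  also have "\<dots> = (\<Sum>\<^sub>\<infinity>i\<in>I. ennreal (\<mu> i * (1 - PE P E i)))"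
    by (intro infsum_cong) (simp add: stays)
  finally have "ennreal \<gamma> + (\<Sum>\<^sub>\<infinity>i\<in>I. ennreal (\<mu> i * PE P E i))
      = (\<Sum>\<^sub>\<infinity>i\<in>I. ennreal (\<mu> i * (1 - PE P E i)) + ennreal (\<mu> i * PE P E i))"
    by (simp add: ennreal_infsum_add)
  also have "\<dots> = (\<Sum>\<^sub>\<infinity>i\<in>I. ennreal (\<mu> i * (1 - PE P E i) + \<mu> i * PE P E i))"
    using \<mu>_nonneg PE_nonneg PE_le_1 by (intro infsum_cong ennreal_plus[symmetric]) auto
  also have "\<dots> = (\<Sum>\<^sub>\<infinity>i\<in>I. ennreal (\<mu> i))"
    by (simp add: algebra_simps)
  also have "\<dots> = 1"
    using infsum_ennreal_has_sum[OF \<mu>_sum \<mu>_nonneg] by simp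
  finally have "ennreal \<gamma> + (\<Sum>\<^sub>\<infinity>i\<in>I. ennreal (\<mu> i * PE P E i)) = 1" .
  then have "(\<Sum>\<^sub>\<infinity>i\<in>I. ennreal (\<mu> i * PE P E i)) = 1 - ennreal \<gamma>"
    using ennreal_add_diff_cancel_left[of "ennreal \<gamma>"] by (metis ennreal_neq_top)
  with \<gamma>_nonneg show ?thesis
    using ennreal_minus[of \<gamma> 1] by simp
qed

lemma regeneration_stationary:
  assumes "j \<in> I"
  shows "(\<Sum>\<^sub>\<infinity>i\<in>I. ennreal (\<mu> i * P i j) + ennreal (\<mu> i * PE P E i * \<mu> j)) = ennreal (\<mu> j)"
proof -
  have "(\<Sum>\<^sub>\<infinity>i\<in>I. ennreal (\<mu> i * P i j)) = ennreal (\<gamma> * \<mu> j)"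
    using assms \<mu>_nonneg P_nonneg by (intro infsum_ennreal_has_sum quasi_stationary) auto
  moreover have "(\<Sum>\<^sub>\<infinity>i\<in>I. ennreal (\<mu> i * PE P E i * \<mu> j)) = ennreal ((1 - \<gamma>) * \<mu> j)"
    using assms \<mu>_nonneg
    by (simp add: ennreal_mult'' ennreal_infsum_cmult_left exit_mass)
  ultimately have "(\<Sum>\<^sub>\<infinity>i\<in>I. ennreal (\<mu> i * P i j) + ennreal (\<mu> i * PE P E i * \<mu> j))
      = ennreal (\<gamma> * \<mu> j + (1 - \<gamma>) * \<mu> j)"
    using assms \<mu>_nonneg \<gamma>_nonneg \<gamma>_le_1 by (simp add: ennreal_infsum_add)
  then show ?thesis
    by (simp add: algebra_simps)
qed

lemma eta_marginal:
  assumes "j \<in> I"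
  shows "(\<Sum>\<^sub>\<infinity>i\<in>I. \<Sum>\<^sub>\<infinity>d\<in>Estar E. ennreal (eta P \<mu> (i, j, d))) = ennreal (\<mu> j)"
proof -
  have "(\<Sum>\<^sub>\<infinity>e\<in>E. ennreal (\<mu> i * P i e * \<mu> j)) = ennreal (\<mu> i * PE P E i * \<mu> j)" if "i \<in> I" for i
    using has_sum_cmult_left[OF has_sum_cmult_right[OF exit_has_sum[OF that]]]
      assms that \<mu>_nonneg P_nonneg
    by (intro infsum_ennreal_has_sum) auto
  then show ?thesis
    using regeneration_stationary[OF assms]
    by (simp add: infsum_Estar eta_def cong: infsum_cong)
qed

lemma zeta_marginal:
  assumes "j \<in> I"
  shows "(\<Sum>\<^sub>\<infinity>i\<in>I. \<Sum>\<^sub>\<infinity>a\<in>{0, 1}. ennreal (zeta P E \<mu> (i, j, a))) = ennreal (\<mu> j)"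
  using regeneration_stationary[OF assms]
  by (simp add: zeta_def add.commute)

abbreviation H\<mu> :: ennreal where
  "H\<mu> \<equiv> \<Sum>\<^sub>\<infinity>k\<in>I. entropy_term (\<mu> k)"

lemma Amat_row_entropy:
  assumes j: "j \<in> I"
  shows "(\<Sum>\<^sub>\<infinity>k\<in>I. \<Sum>\<^sub>\<infinity>u\<in>Estar E.
            entropy_term (case u of None \<Rightarrow> P j k | Some \<epsilon> \<Rightarrow> P j \<epsilon> * \<mu> k))
       = (\<Sum>\<^sub>\<infinity>k\<in>I. entropy_term (P j k)) + (\<Sum>\<^sub>\<infinity>e\<in>E. entropy_term (P j e))
         + ennreal (PE P E j) * H\<mu>"
proof -
  have "(\<Sum>\<^sub>\<infinity>k\<in>I. \<Sum>\<^sub>\<infinity>e\<in>E. entropy_term (P j e * \<mu> k))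
      = (\<Sum>\<^sub>\<infinity>e\<in>E. entropy_term (P j e) + ennreal (P j e) * H\<mu>)"
    using j \<mu>_sum \<mu>_nonneg P_nonneg P_le_1
    by (subst ennreal_infsum_swap) (intro infsum_cong infsum_entropy_term_scaled; simp)
  also have "\<dots> = (\<Sum>\<^sub>\<infinity>e\<in>E. entropy_term (P j e)) + ennreal (PE P E j) * H\<mu>"
  proof -
    have "(\<Sum>\<^sub>\<infinity>e\<in>E. ennreal (P j e)) = ennreal (PE P E j)"
      using j P_nonneg by (intro infsum_ennreal_has_sum exit_has_sum) auto
    then show ?thesis
      by (simp add: ennreal_infsum_add ennreal_infsum_cmult_left)
  qed
  finally show ?thesis
    by (simp add: infsum_Estar ennreal_infsum_add add.assoc)
qed

lemma Kmat_row_entropy: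
  assumes j: "j \<in> I"
  shows "(\<Sum>\<^sub>\<infinity>k\<in>I. \<Sum>\<^sub>\<infinity>b\<in>{0, 1::nat}. entropy_term
            ((if b = 1 then P j k else 0) + (if b = 0 then PE P E j * \<mu> k else 0)))
       = (\<Sum>\<^sub>\<infinity>k\<in>I. entropy_term (P j k)) + entropy_term (PE P E j)
         + ennreal (PE P E j) * H\<mu>"
proof -
  have "(\<Sum>\<^sub>\<infinity>k\<in>I. \<Sum>\<^sub>\<infinity>b\<in>{0, 1::nat}. entropy_term
            ((if b = 1 then P j k else 0) + (if b = 0 then PE P E j * \<mu> k else 0)))
      = (\<Sum>\<^sub>\<infinity>k\<in>I. entropy_term (P j k) + entropy_term (PE P E j * \<mu> k))"
    by (intro infsum_cong) (simp add: add.commute)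
  then show ?thesis
    using infsum_entropy_term_scaled[OF \<mu>_sum \<mu>_nonneg PE_nonneg[OF j] PE_le_1[OF j]]
    by (simp add: ennreal_infsum_add add.assoc)
qed

lemma exit_entropy_grouping:
  assumes j: "j \<in> I"
  shows "(\<Sum>\<^sub>\<infinity>e\<in>E. entropy_term (P j e)) = entropy_term (PE P E j) + ennreal (PE P E j) * HD P E j"
  using infsum_entropy_term_grouping[OF exit_has_sum[OF j]] j P_nonneg PE_le_1
  by (simp add: HD_def entropy_term_def)

lemma entropy_rate_Amat:
  "entropy_rate (I \<times> I \<times> Estar E) (Amat P \<mu>) (eta P \<mu>)
     = (\<Sum>\<^sub>\<infinity>j\<in>I. ennreal (\<mu> j) * ((\<Sum>\<^sub>\<infinity>k\<in>I. entropy_term (P j k))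
          + (\<Sum>\<^sub>\<infinity>e\<in>E. entropy_term (P j e)) + ennreal (PE P E j) * H\<mu>))"
    (is "_ = ?rhs")
proof -
  have "entropy_rate (I \<times> I \<times> Estar E) (Amat P \<mu>) (eta P \<mu>)
      = (\<Sum>\<^sub>\<infinity>j\<in>I. (\<Sum>\<^sub>\<infinity>i\<in>I. \<Sum>\<^sub>\<infinity>d\<in>Estar E. ennreal (eta P \<mu> (i, j, d)))
          * (\<Sum>\<^sub>\<infinity>k\<in>I. \<Sum>\<^sub>\<infinity>u\<in>Estar E.
               entropy_term (case u of None \<Rightarrow> P j k | Some \<epsilon> \<Rightarrow> P j \<epsilon> * \<mu> k)))"
    by (rule entropy_rate_edge_chain) (simp add: Amat_def)
  also have "\<dots> = ?rhs"
    by (intro infsum_cong) (simp only: eta_marginal Amat_row_entropy)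
  finally show ?thesis .
qed

lemma entropy_rate_Kmat:
  "entropy_rate (I \<times> I \<times> {0, 1}) (Kmat P E \<mu>) (zeta P E \<mu>)
     = (\<Sum>\<^sub>\<infinity>j\<in>I. ennreal (\<mu> j) * ((\<Sum>\<^sub>\<infinity>k\<in>I. entropy_term (P j k))
          + entropy_term (PE P E j) + ennreal (PE P E j) * H\<mu>))"
    (is "_ = ?rhs")
proof -
  have "entropy_rate (I \<times> I \<times> {0, 1}) (Kmat P E \<mu>) (zeta P E \<mu>)
      = (\<Sum>\<^sub>\<infinity>j\<in>I. (\<Sum>\<^sub>\<infinity>i\<in>I. \<Sum>\<^sub>\<infinity>a\<in>{0, 1}. ennreal (zeta P E \<mu> (i, j, a)))
          * (\<Sum>\<^sub>\<infinity>k\<in>I. \<Sum>\<^sub>\<infinity>b\<in>{0, 1::nat}. entropy_term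
               ((if b = 1 then P j k else 0) + (if b = 0 then PE P E j * \<mu> k else 0))))"
    by (rule entropy_rate_edge_chain) (simp add: Kmat_def)
  also have "\<dots> = ?rhs"
    by (intro infsum_cong) (simp only: zeta_marginal Kmat_row_entropy)
  finally show ?thesis .
qed

theorem entropy_rate_Amat_eq_Kmat_plus_exit_entropy:
  "entropy_rate (I \<times> I \<times> Estar E) (Amat P \<mu>) (eta P \<mu>)
     = entropy_rate (I \<times> I \<times> {0, 1}) (Kmat P E \<mu>) (zeta P E \<mu>)
       + (\<Sum>\<^sub>\<infinity>i\<in>I. ennreal (\<mu> i * PE P E i) * HD P E i)"
  unfolding entropy_rate_Amat entropy_rate_Kmat ennreal_infsum_add[symmetric]
  using exit_entropy_grouping \<mu>_nonneg
  by (intro infsum_cong) (simp add: ennreal_mult' distrib_left add_ac mult.assoc)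

theorem entropy_rate_Amat_explicit:
  "entropy_rate (I \<times> I \<times> Estar E) (Amat P \<mu>) (eta P \<mu>)
     = ennreal (1 - \<gamma>) * (\<Sum>\<^sub>\<infinity>j\<in>I. ennreal (- (\<mu> j * ln (\<mu> j))))
       + (\<Sum>\<^sub>\<infinity>(i, j)\<in>I \<times> I. ennreal (- (\<mu> i * P i j * ln (P i j))))
       + (\<Sum>\<^sub>\<infinity>(i, \<delta>)\<in>I \<times> E. ennreal (- (\<mu> i * P i \<delta> * ln (P i \<delta>))))"
proof -
  have weighted: "(\<Sum>\<^sub>\<infinity>(i, j)\<in>I \<times> J. ennreal (- (\<mu> i * P i j * ln (P i j))))
      = (\<Sum>\<^sub>\<infinity>i\<in>I. ennreal (\<mu> i) * (\<Sum>\<^sub>\<infinity>j\<in>J. entropy_term (P i j)))" for J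
    unfolding ennreal_infsum_Times
    by (intro infsum_cong) (simp add: \<mu>_nonneg ennreal_mult_entropy_term ennreal_infsum_cmult_right)
  have "ennreal (1 - \<gamma>) * H\<mu> = (\<Sum>\<^sub>\<infinity>j\<in>I. ennreal (\<mu> j * PE P E j) * H\<mu>)"
    by (simp add: exit_mass ennreal_infsum_cmult_left)
  also have "\<dots> = (\<Sum>\<^sub>\<infinity>j\<in>I. ennreal (\<mu> j) * (ennreal (PE P E j) * H\<mu>))"
    using \<mu>_nonneg by (intro infsum_cong) (simp add: ennreal_mult' mult.assoc)
  finally show ?thesis
    unfolding entropy_rate_Amat weighted
    by (simp add: entropy_term_def[symmetric] distrib_left ennreal_infsum_add add_ac)
qed

end

theorem proposition4:
  fixes I E :: "'s set" and P :: "'s \<Rightarrow> 's \<Rightarrow> real" and \<mu> :: "'s \<Rightarrow> real" and \<gamma> :: real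
  assumes countI: "countable I" and countE: "countable E"
    and disj: "I \<inter> E = {}" and Ene: "E \<noteq> {}"
    and Pnn: "\<And>x y. x \<in> I \<union> E \<Longrightarrow> y \<in> I \<union> E \<Longrightarrow> P x y \<ge> 0"
    and Prow: "\<And>x. x \<in> I \<union> E \<Longrightarrow> ((\<lambda>y. P x y) has_sum 1) (I \<union> E)"
    and absorb: "\<And>\<epsilon>. \<epsilon> \<in> E \<Longrightarrow> P \<epsilon> \<epsilon> = 1"
    and irred: "\<And>i j. i \<in> I \<Longrightarrow> j \<in> I \<Longrightarrow>
                  (i, j) \<in> {(x, y). x \<in> I \<and> y \<in> I \<and> P x y > 0}\<^sup>*"
    and exit_pos: "(\<Sum>\<^sub>\<infinity>i\<in>I. ennreal (PE P E i)) > 0"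
    and absorbed: "\<And>i. i \<in> I \<Longrightarrow>
                  (\<lambda>n. \<Sum>\<^sub>\<infinity>\<epsilon>\<in>E. mpow P (I \<union> E) n i \<epsilon>) \<longlonglongrightarrow> 1"
    and \<mu>nn: "\<And>i. i \<in> I \<Longrightarrow> \<mu> i \<ge> 0"
    and \<mu>prob: "(\<mu> has_sum 1) I"
    and \<gamma>_def: "\<gamma> = (\<Sum>\<^sub>\<infinity>(i, j)\<in>I \<times> I. \<mu> i * P i j)"
    and qsd: "\<And>j. j \<in> I \<Longrightarrow> ((\<lambda>i. \<mu> i * P i j) has_sum \<gamma> * \<mu> j) I"
    and \<gamma>_pos: "0 < \<gamma>" and \<gamma>_lt1: "\<gamma> < 1"
  shows "(entropy_rate (I \<times> I \<times> Estar E) (Amat P \<mu>) (eta P \<mu>)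
           = entropy_rate (I \<times> I \<times> {0, 1}) (Kmat P E \<mu>) (zeta P E \<mu>)
             + (\<Sum>\<^sub>\<infinity>i\<in>I. ennreal (\<mu> i * PE P E i) * HD P E i))
         \<and> (entropy_rate (I \<times> I \<times> Estar E) (Amat P \<mu>) (eta P \<mu>)
           = ennreal (1 - \<gamma>) * (\<Sum>\<^sub>\<infinity>j\<in>I. ennreal (- (\<mu> j * ln (\<mu> j))))
             + (\<Sum>\<^sub>\<infinity>(i, j)\<in>I \<times> I. ennreal (- (\<mu> i * P i j * ln (P i j))))
             + (\<Sum>\<^sub>\<infinity>(i, \<delta>)\<in>I \<times> E. ennreal (- (\<mu> i * P i \<delta> * ln (P i \<delta>)))))"
proof -
  interpret quasi_stationary_exit I E P \<mu> \<gamma>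
    using disj Pnn Prow \<mu>nn \<mu>prob qsd \<gamma>_pos \<gamma>_lt1 by unfold_locales auto
  show ?thesis
    using entropy_rate_Amat_eq_Kmat_plus_exit_entropy entropy_rate_Amat_explicit by (rule conjI)
qed

end
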